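(* Let $G$ be a finite, connected, simple graph with shortest-path metric $d$. Then $G$ is meshed if and only if for every metric triangle $vxy$ of $G$ with $d(x,y)=2$, we have $d(v,x)=d(v,y)=2$ and there exists a vertex $z$ adjacent to both $x$ and $y$ such that $d(v,z)=2$.
   Context: All graphs are finite, connected, undirected, without loops or multiple edges; $d$ denotes the shortest-path distance. The interval between vertices $u,w$ is $I(u,w)=\{x: d(u,x)+d(x,w)=d(u,w)\}$. Three vertices $x,y,z$ form a metric triangle $xyz$ if $I(x,y)\cap I(x,z)=\{x\}$, $I(x,y)\cap I(y,z)=\{y\}$ and $I(x,z)\cap I(y,z)=\{z\}$. A graph $G$ is meshed if for any three vertices $v,x,y$ with $d(x,y)=2$ there exists a common neighbor $z$ of $x$ and $y$ such that $2d(v,z)\le d(v,x)+d(v,y)$. *)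

theory Defs
  imports Main
begin

definition simple_graph :: "'a set \<Rightarrow> ('a \<Rightarrow> 'a \<Rightarrow> bool) \<Rightarrow> bool" where
  "simple_graph V E \<longleftrightarrow> finite V \<and> V \<noteq> {}
     \<and> (\<forall>x y. E x y \<longrightarrow> x \<in> V \<and> y \<in> V)
     \<and> (\<forall>x y. E x y \<longrightarrow> E y x) \<and> (\<forall>x. \<not> E x x)"

fun walk :: "'a set \<Rightarrow> ('a \<Rightarrow> 'a \<Rightarrow> bool) \<Rightarrow> 'a list \<Rightarrow> bool" where
  "walk V E [] = False"
| "walk V E [x] = (x \<in> V)"
| "walk V E (x # y # xs) = (x \<in> V \<and> E x y \<and> walk V E (y # xs))"

definition connected_graph :: "'a set \<Rightarrow> ('a \<Rightarrow> 'a \<Rightarrow> bool) \<Rightarrow> bool" where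
  "connected_graph V E \<longleftrightarrow>
     (\<forall>x\<in>V. \<forall>y\<in>V. \<exists>p. walk V E p \<and> hd p = x \<and> last p = y)"

definition gdist :: "'a set \<Rightarrow> ('a \<Rightarrow> 'a \<Rightarrow> bool) \<Rightarrow> 'a \<Rightarrow> 'a \<Rightarrow> nat" where
  "gdist V E x y = (LEAST n. \<exists>p. walk V E p \<and> hd p = x \<and> last p = y \<and> length p = Suc n)"

definition interval :: "'a set \<Rightarrow> ('a \<Rightarrow> 'a \<Rightarrow> bool) \<Rightarrow> 'a \<Rightarrow> 'a \<Rightarrow> 'a set" where
  "interval V E u w = {x \<in> V. gdist V E u x + gdist V E x w = gdist V E u w}"

definition metric_triangle :: "'a set \<Rightarrow> ('a \<Rightarrow> 'a \<Rightarrow> bool) \<Rightarrow> 'a \<Rightarrow> 'a \<Rightarrow> 'a \<Rightarrow> bool" where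
  "metric_triangle V E x y z \<longleftrightarrow> x \<in> V \<and> y \<in> V \<and> z \<in> V \<and>
     interval V E x y \<inter> interval V E x z = {x} \<and>
     interval V E x y \<inter> interval V E y z = {y} \<and>
     interval V E x z \<inter> interval V E y z = {z}"

definition meshed :: "'a set \<Rightarrow> ('a \<Rightarrow> 'a \<Rightarrow> bool) \<Rightarrow> bool" where
  "meshed V E \<longleftrightarrow> (\<forall>v\<in>V. \<forall>x\<in>V. \<forall>y\<in>V. gdist V E x y = 2 \<longrightarrow>
     (\<exists>z\<in>V. E x z \<and> E y z \<and> 2 * gdist V E v z \<le> gdist V E v x + gdist V E v y))"

end

theory Submission
  imports Defs
begin

(* A meshed graph satisfies the triangle condition: an edge xy with d(v,x) = d(v,y) = k >= 1 has
  a common neighbour at distance k - 1 from v; this follows by induction on k, using the meshed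
  condition once with base point v and once with base point y.

  Forward direction: in a metric triangle vxy with d(x,y) = 2, the meshed witness z satisfies
  d(v,z) = d(v,x) = d(v,y) = k, because a neighbour of x that is closer to v would lie in
  I(v,x) \<inter> I(x,y) = {x}. If k >= 2, two applications of the triangle condition produce a vertex
  at distance k - 2 from v and at distance at most 2 from both x and y; it lies in
  I(v,x) \<inter> I(v,y) = {v}, so k = 2.

  Backward direction: if I(v,x) meets I(x,y) outside x (or symmetrically for y), a witness is
  read off directly. Otherwise a vertex v' of I(v,x) \<inter> I(v,y) farthest from v spans a metric
  triangle v'xy, and the common neighbour at distance 2 from v' is a witness for v. *)

lemma walk_not_Nil: "walk V E p \<Longrightarrow> p \<noteq> []"
  by (cases p) auto

lemma walk_Cons_iff: "walk V E (x # p) \<longleftrightarrow> x \<in> V \<and> (p = [] \<or> E x (hd p) \<and> walk V E p)"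
  by (cases p) auto

lemma walk_append:
  "walk V E p \<Longrightarrow> walk V E q \<Longrightarrow> last p = hd q \<Longrightarrow> walk V E (p @ tl q)"
proof (induction p)
  case (Cons a p)
  then show ?case
    by (cases p; cases q) (auto simp: walk_Cons_iff)
qed simp

lemma walk_rev: "(\<And>x y. E x y \<Longrightarrow> E y x) \<Longrightarrow> walk V E p \<Longrightarrow> walk V E (rev p)"
proof (induction p)
  case (Cons a p)
  show ?case
  proof (cases p)
    case (Cons b r)
    then have "walk V E (rev p)" "walk V E [b, a]"
      using Cons.IH Cons.prems by (auto simp: walk_Cons_iff)
    from walk_append[OF this] show ?thesis
      using Cons by (simp add: last_rev)
  qed (use Cons in auto)
qed simp

locale connected_simple_graph =
  fixes V :: "'a set" and E :: "'a \<Rightarrow> 'a \<Rightarrow> bool"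
  assumes simple: "simple_graph V E" and connected: "connected_graph V E"
begin

abbreviation d :: "'a \<Rightarrow> 'a \<Rightarrow> nat" where "d \<equiv> gdist V E"
abbreviation I :: "'a \<Rightarrow> 'a \<Rightarrow> 'a set" where "I \<equiv> interval V E"

lemma edge_in_V: "E x y \<Longrightarrow> x \<in> V \<and> y \<in> V"
  and edge_sym: "E x y \<Longrightarrow> E y x"
  and edge_irrefl: "\<not> E x x"
  using simple by (auto simp: simple_graph_def)

lemma shortest_walk:
  assumes "x \<in> V" "y \<in> V"
  obtains p where "walk V E p" "hd p = x" "last p = y" "length p = Suc (d x y)"
proof -
  obtain p where p: "walk V E p" "hd p = x" "last p = y"
    using connected assms unfolding connected_graph_def by blast
  then have "length p = Suc (length p - 1)"
    using walk_not_Nil by (cases p) auto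
  with p have "\<exists>n p. walk V E p \<and> hd p = x \<and> last p = y \<and> length p = Suc n"
    by blast
  from LeastI_ex[OF this] show ?thesis
    using that unfolding gdist_def by blast
qed

lemma gdist_le_walk:
  assumes "walk V E p" "hd p = x" "last p = y"
  shows "d x y \<le> length p - 1"
proof -
  have "length p = Suc (length p - 1)"
    using walk_not_Nil assms by (cases p) auto
  then show ?thesis
    unfolding gdist_def using assms by (intro Least_le) metis
qed

lemma gdist_triangle:
  assumes "x \<in> V" "y \<in> V" "z \<in> V"
  shows "d x z \<le> d x y + d y z"
proof -
  obtain p where p: "walk V E p" "hd p = x" "last p = y" "length p = Suc (d x y)"
    using shortest_walk assms by blast
  obtain q where q: "walk V E q" "hd q = y" "last q = z" "length q = Suc (d y z)"
    using shortest_walk assms by blast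
  have "walk V E (p @ tl q)"
    using walk_append[OF p(1) q(1)] p q by simp
  moreover have "hd (p @ tl q) = x" "last (p @ tl q) = z"
    using p q walk_not_Nil[OF p(1)] walk_not_Nil[OF q(1)] by (cases q; auto)+
  ultimately have "d x z \<le> length (p @ tl q) - 1"
    by (rule gdist_le_walk)
  with p q show ?thesis
    by simp
qed

lemma gdist_sym:
  assumes "x \<in> V" "y \<in> V"
  shows "d x y = d y x"
proof -
  have "d y x \<le> d x y" if xy: "x \<in> V" "y \<in> V" for x y
  proof -
    obtain p where p: "walk V E p" "hd p = x" "last p = y" "length p = Suc (d x y)"
      using shortest_walk[OF xy] by blast
    have "walk V E (rev p)"
      using walk_rev[OF _ p(1)] edge_sym by blast
    moreover have "hd (rev p) = y" "last (rev p) = x"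
      using p walk_not_Nil by (auto simp: hd_rev last_rev)
    ultimately show ?thesis
      using gdist_le_walk[of "rev p" y x] p by simp
  qed
  with assms show ?thesis
    by (meson antisym)
qed

lemma gdist_self: "x \<in> V \<Longrightarrow> d x x = 0"
  using gdist_le_walk[of "[x]" x x] by simp

lemma gdist_eq_0_iff:
  assumes "x \<in> V" "y \<in> V"
  shows "d x y = 0 \<longleftrightarrow> x = y"
proof
  assume "d x y = 0"
  moreover obtain p where "walk V E p" "hd p = x" "last p = y" "length p = Suc (d x y)"
    using shortest_walk assms by blast
  ultimately show "x = y"
    by (cases p) auto
qed (use assms gdist_self in simp)

lemma gdist_edge: "E x y \<Longrightarrow> d x y = 1"
  using gdist_le_walk[of "[x, y]" x y] gdist_eq_0_iff[of x y] edge_in_V[of x y] edge_irrefl[of x]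
  by fastforce

lemma gdist_SucE:
  assumes "x \<in> V" "y \<in> V" "d x y = Suc n"
  obtains x' where "E x x'" "d x' y = n"
proof -
  obtain p where p: "walk V E p" "hd p = x" "last p = y" "length p = Suc (d x y)"
    using shortest_walk assms by blast
  then obtain x' r where pr: "p = x # x' # r"
    using assms by (cases p; cases "tl p") auto
  then have "walk V E (x' # r)" "E x x'"
    using p by auto
  then have "d x' y \<le> n"
    using gdist_le_walk[of "x' # r" x' y] p pr assms by simp
  moreover have "d x y \<le> d x x' + d x' y"
    using gdist_triangle assms edge_in_V \<open>E x x'\<close> by blast
  ultimately show ?thesis
    using that gdist_edge \<open>E x x'\<close> assms by force
qed

lemma gdist_eq_1_iff:
  assumes "x \<in> V" "y \<in> V"
  shows "d x y = 1 \<longleftrightarrow> E x y"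
proof
  assume "d x y = 1"
  then obtain x' where "E x x'" "d x' y = 0"
    using gdist_SucE assms by (metis One_nat_def)
  then show "E x y"
    using gdist_eq_0_iff edge_in_V assms by metis
qed (rule gdist_edge)

lemma gdist_eq_2E:
  assumes "x \<in> V" "y \<in> V" "d x y = 2"
  obtains z where "E x z" "E z y"
proof -
  have "d x y = Suc 1"
    using assms by simp
  then obtain z where "E x z" "d z y = 1"
    using gdist_SucE assms by blast
  then show ?thesis
    using that gdist_eq_1_iff edge_in_V assms by blast
qed

lemma gdist_le_2: "E x z \<Longrightarrow> E z y \<Longrightarrow> d x y \<le> 2"
  using gdist_triangle[of x z y] gdist_edge edge_in_V by fastforce

lemma gdist_eq_2I: "E x z \<Longrightarrow> E z y \<Longrightarrow> x \<noteq> y \<Longrightarrow> \<not> E x y \<Longrightarrow> d x y = 2"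
  using gdist_le_2[of x z y] gdist_eq_0_iff[of x y] gdist_eq_1_iff[of x y] edge_in_V
  by (metis One_nat_def le_SucE le_zero_eq numeral_2_eq_2)

lemma gdist_neighbor_le: "v \<in> V \<Longrightarrow> E x y \<Longrightarrow> d v y \<le> Suc (d v x)"
  using gdist_triangle[of v x y] gdist_edge edge_in_V by fastforce

lemma in_intervalI:
  "a \<in> V \<Longrightarrow> b \<in> V \<Longrightarrow> u \<in> V \<Longrightarrow> d a u + d u b \<le> d a b \<Longrightarrow> u \<in> I a b"
  using gdist_triangle[of a u b] by (simp add: interval_def)

lemma left_in_interval: "a \<in> V \<Longrightarrow> b \<in> V \<Longrightarrow> a \<in> I a b"
  and right_in_interval: "a \<in> V \<Longrightarrow> b \<in> V \<Longrightarrow> b \<in> I a b"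
  by (simp_all add: interval_def gdist_self)

lemma interval_sym: "a \<in> V \<Longrightarrow> b \<in> V \<Longrightarrow> I a b = I b a"
  unfolding interval_def using gdist_sym by auto

lemma interval_trans:
  assumes "v \<in> V" "x \<in> V" "v' \<in> I v x" "u \<in> I v' x"
  shows "u \<in> I v x" "d v u = d v v' + d v' u"
proof -
  have "v' \<in> V" "d v v' + d v' x = d v x" "u \<in> V" "d v' u + d u x = d v' x"
    using assms(3,4) by (auto simp: interval_def)
  moreover have "d v u \<le> d v v' + d v' u" "d v x \<le> d v u + d u x"
    using gdist_triangle assms(1,2) calculation by blast+
  ultimately show "u \<in> I v x" "d v u = d v v' + d v' u"
    by (auto simp: interval_def)
qed

lemma metric_triangleI:
  assumes "x \<in> V" "y \<in> V" "z \<in> V"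
    and "I x y \<inter> I x z \<subseteq> {x}" "I x y \<inter> I y z \<subseteq> {y}" "I x z \<inter> I y z \<subseteq> {z}"
  shows "metric_triangle V E x y z"
  using assms left_in_interval[of x y] left_in_interval[of x z] left_in_interval[of y z]
    right_in_interval[of x y] right_in_interval[of x z] right_in_interval[of y z]
  unfolding metric_triangle_def by blast

lemma metric_triangle_swap:
  assumes "metric_triangle V E x y z"
  shows "metric_triangle V E x z y"
proof -
  have "y \<in> V" "z \<in> V"
    using assms unfolding metric_triangle_def by auto
  then have "I z y = I y z"
    by (simp add: interval_sym)
  with assms show ?thesis
    unfolding metric_triangle_def by (simp add: Int_commute)
qed

lemma metric_triangle_neighbor_not_closer:
  assumes "metric_triangle V E v x y" "E x z" "z \<in> I x y"
  shows "d v x \<le> d v z"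
proof (rule ccontr)
  assume "\<not> d v x \<le> d v z"
  moreover have "v \<in> V" "x \<in> V" "z \<in> V"
    using assms edge_in_V unfolding metric_triangle_def by auto
  moreover have "d v x \<le> Suc (d v z)" "d z x = 1"
    using gdist_neighbor_le gdist_edge edge_sym assms(2) calculation by blast+
  ultimately have "z \<in> I v x"
    by (intro in_intervalI) auto
  with assms have "z = x"
    unfolding metric_triangle_def by blast
  with assms(2) show False
    using edge_irrefl by blast
qed

lemma meshedD:
  assumes "meshed V E" "v \<in> V" "x \<in> V" "y \<in> V" "d x y = 2"
  obtains z where "E x z" "E y z" "2 * d v z \<le> d v x + d v y"
  using assms unfolding meshed_def by blast

lemma meshed_common_neighbor_level:
  assumes "meshed V E" "v \<in> V" "x \<in> V" "y \<in> V" "d x y = 2" "d v x = n" "d v y = Suc n"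
  obtains w where "E x w" "E y w" "d v w = n"
proof -
  obtain w where w: "E x w" "E y w" "2 * d v w \<le> d v x + d v y"
    using meshedD assms by blast
  moreover have "d v y \<le> Suc (d v w)"
    using gdist_neighbor_le[OF assms(2) edge_sym[OF w(2)]] .
  ultimately show ?thesis
    using that assms(6,7) by simp
qed

lemma meshed_common_neighbor_above:
  assumes M: "meshed V E" and V: "v \<in> V" "c \<in> V" and "E x y"
    and levels: "d v x = d v c + 2" "d v y = d v c + 2" and close: "d c x \<le> 2" "d c y \<le> 2"
  obtains e where "E x e" "E y e" "d v e = Suc (d v c)"
proof -
  have xy: "x \<in> V" "y \<in> V"
    using \<open>E x y\<close> edge_in_V by auto
  have "d v x \<le> d v c + d c x" "d v y \<le> d v c + d c y"
    using gdist_triangle V xy by blast+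
  then have "d x c = 2" "d y c = Suc 1"
    using levels close gdist_sym V xy by (metis add_le_cancel_left le_antisym one_add_one plus_1_eq_Suc)+
  moreover have "d y x = 1"
    using gdist_edge edge_sym \<open>E x y\<close> by blast
  ultimately obtain e where e: "E x e" "E c e" "d y e = 1"
    using meshed_common_neighbor_level[OF M xy(2,1) V(2)] by blast
  have "d v e \<le> Suc (d v c)" "d v x \<le> Suc (d v e)"
    using gdist_neighbor_le e edge_sym V by blast+
  with e show ?thesis
    using that gdist_eq_1_iff xy edge_in_V levels by fastforce
qed

lemma meshed_triangle_condition_step:
  assumes M: "meshed V E" and v: "v \<in> V" and "E x y" "d v x = k" "d v y = k" "2 \<le> k"
    and below: "\<And>x' w. E x' w \<Longrightarrow> d v x' = k - 1 \<Longrightarrow> d v w = k - 1 \<Longrightarrow>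
      \<exists>c. E x' c \<and> E w c \<and> d v c = k - 2"
  shows "\<exists>w. E x w \<and> E y w \<and> d v w = k - 1"
proof -
  have xy: "x \<in> V" "y \<in> V"
    using \<open>E x y\<close> edge_in_V by auto
  have "d x v = Suc (k - 1)"
    using assms(4,6) gdist_sym xy v by simp
  then obtain x' where x': "E x x'" "d x' v = k - 1"
    using gdist_SucE xy v by blast
  then have x'_level: "d v x' = k - 1"
    using gdist_sym edge_in_V v by metis
  show ?thesis
  proof (cases "E x' y")
    case True
    with x' x'_level show ?thesis
      using edge_sym by blast
  next
    case False
    have "x' \<noteq> y"
      using x'_level assms(5,6) by auto
    with False have "d x' y = 2"
      using gdist_eq_2I[OF edge_sym[OF x'(1)] \<open>E x y\<close>] by blast
    then obtain w where w: "E x' w" "E y w" "d v w = k - 1"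
      using meshed_common_neighbor_level[OF M v, of x' y "k - 1"] x'_level assms(5,6)
        edge_in_V x' xy by auto
    then obtain c where c: "E x' c" "E w c" "d v c = k - 2"
      using below x'_level by blast
    have "d v x = d v c + 2" "d v y = d v c + 2"
      using c(3) assms(4-6) by auto
    moreover have "d c x \<le> 2" "d c y \<le> 2"
      using gdist_le_2 c x'(1) w(2) edge_sym by blast+
    ultimately obtain e where "E x e" "E y e" "d v e = Suc (d v c)"
      using meshed_common_neighbor_above[OF M v _ \<open>E x y\<close>] edge_in_V[OF c(1)] by blast
    with c(3) assms(6) show ?thesis
      by auto
  qed
qed

lemma meshed_triangle_condition:
  assumes M: "meshed V E" and v: "v \<in> V"
  shows "E x y \<Longrightarrow> d v x = k \<Longrightarrow> d v y = k \<Longrightarrow> 1 \<le> k \<Longrightarrow> \<exists>w. E x w \<and> E y w \<and> d v w = k - 1"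
proof (induction k arbitrary: x y rule: less_induct)
  case (less k)
  consider "k = 1" | "2 \<le> k"
    using less.prems by linarith
  then show ?case
  proof cases
    case 1
    then have "E x v" "E y v"
      using less.prems gdist_eq_1_iff gdist_sym edge_in_V v edge_sym by metis+
    with 1 show ?thesis
      using gdist_self v by auto
  next
    case 2
    have "\<exists>c. E x' c \<and> E w c \<and> d v c = k - 2"
      if "E x' w" "d v x' = k - 1" "d v w = k - 1" for x' w
      using less.IH[OF _ that] 2 by (simp add: numeral_2_eq_2)
    with 2 show ?thesis
      using meshed_triangle_condition_step[OF M v less.prems(1-3)] by blast
  qed
qed

lemma common_neighbor_in_interval:
  "d x y = 2 \<Longrightarrow> E x z \<Longrightarrow> E y z \<Longrightarrow> z \<in> I x y"
  using in_intervalI[of x y z] gdist_edge edge_sym edge_in_V by (metis eq_refl one_add_one)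

lemma meshed_metric_triangle_apex:
  assumes M: "meshed V E" and T: "metric_triangle V E v x y" and "d x y = 2"
    and z: "E x z" "E y z" and k: "d v x = k" "d v y = k" "d v z = k" "2 \<le> k"
  shows "k = 2"
proof -
  have V: "v \<in> V" "x \<in> V" "y \<in> V"
    using T unfolding metric_triangle_def by auto
  obtain a where a: "E x a" "E z a" "d v a = k - 1"
    using meshed_triangle_condition[OF M V(1) z(1)] k by auto
  have "\<not> E y a"
    using metric_triangle_neighbor_not_closer[OF T a(1)] common_neighbor_in_interval[OF \<open>d x y = 2\<close> a(1)]
      a(3) k by fastforce
  moreover have "a \<noteq> y"
    using a(3) k by auto
  ultimately have "d a y = 2"
    using gdist_eq_2I[OF edge_sym[OF a(2)] edge_sym[OF z(2)]] by (metis edge_sym)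
  then obtain w where w: "E a w" "E y w" "d v w = k - 1"
    using meshed_common_neighbor_level[OF M V(1), of a y "k - 1"] edge_in_V[OF a(1)] V a(3) k by auto
  have "1 \<le> k - 1"
    using k by simp
  then obtain c where c: "E a c" "E w c" "d v c = k - 1 - 1"
    using meshed_triangle_condition[OF M V(1) w(1) a(3) w(3)] by blast
  have "c \<in> I v x" "c \<in> I v y"
    using in_intervalI gdist_le_2[OF edge_sym[OF c(1)] edge_sym[OF a(1)]]
      gdist_le_2[OF edge_sym[OF c(2)] w(2)[THEN edge_sym]] edge_in_V[OF c(1)] V c(3) k
    by fastforce+
  with T have "c = v"
    unfolding metric_triangle_def by blast
  with c(3) k show ?thesis
    using gdist_self V(1) by simp
qed

lemma meshed_metric_triangle_equilateral:
  assumes M: "meshed V E" and T: "metric_triangle V E v x y" and "d x y = 2"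
  shows "d v x = 2 \<and> d v y = 2 \<and> (\<exists>z\<in>V. E x z \<and> E y z \<and> d v z = 2)"
proof -
  have V: "v \<in> V" "x \<in> V" "y \<in> V"
    using T unfolding metric_triangle_def by auto
  obtain z where z: "E x z" "E y z" "2 * d v z \<le> d v x + d v y"
    using meshedD[OF M V \<open>d x y = 2\<close>] by blast
  have "d y x = 2"
    using \<open>d x y = 2\<close> gdist_sym V by metis
  then have "d v x \<le> d v z" "d v y \<le> d v z"
    using metric_triangle_neighbor_not_closer[OF T z(1)]
      metric_triangle_neighbor_not_closer[OF metric_triangle_swap[OF T] z(2)]
      common_neighbor_in_interval z \<open>d x y = 2\<close> by blast+
  with z(3) have eq: "d v x = d v z" "d v y = d v z"
    by linarith+
  have "d v z \<noteq> 0"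
    using eq \<open>d x y = 2\<close> gdist_eq_0_iff V by force
  moreover have "d v z \<noteq> 1"
  proof
    assume "d v z = 1"
    then have "E x v" "E y v"
      using eq gdist_eq_1_iff V edge_sym by metis+
    then show False
      using metric_triangle_neighbor_not_closer[OF T \<open>E x v\<close>]
        common_neighbor_in_interval[OF \<open>d x y = 2\<close>] gdist_self V eq \<open>d v z = 1\<close> by fastforce
  qed
  ultimately have "d v z = 2"
    using meshed_metric_triangle_apex[OF M T \<open>d x y = 2\<close> z(1,2) eq refl] by linarith
  with eq z show ?thesis
    using edge_in_V[OF z(1)] by auto
qed

lemma common_neighbor_if_intervals_overlap:
  assumes V: "v \<in> V" "x \<in> V" "y \<in> V" and "d x y = 2"
    and u: "u \<in> I v x" "u \<in> I x y" "u \<noteq> x"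
  obtains z where "E x z" "E y z" "2 * d v z \<le> d v x + d v y"
proof -
  have uV: "u \<in> V" and vux: "d v u + d u x = d v x" and xuy: "d x u + d u y = 2"
    using u \<open>d x y = 2\<close> unfolding interval_def by auto
  have "d u x = d x u" "d y x = 2"
    using gdist_sym uV V \<open>d x y = 2\<close> by metis+
  moreover have "d x u \<noteq> 0"
    using gdist_eq_0_iff uV V u(3) by metis
  moreover have "d v x \<le> d v y + d y x"
    using gdist_triangle V by blast
  ultimately consider "d x u = 1" "d u y = 1" | "d x u = 2" "d u y = 0"
    using xuy by linarith
  then show ?thesis
  proof cases
    case 1
    then have "E x u" "E y u"
      using gdist_eq_1_iff uV V edge_sym by metis+
    moreover have "2 * d v u \<le> d v x + d v y"
      using 1 vux \<open>d u x = d x u\<close> \<open>d v x \<le> d v y + d y x\<close> \<open>d y x = 2\<close> by linarith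
    ultimately show ?thesis
      using that by blast
  next
    case 2
    then have "u = y"
      using gdist_eq_0_iff uV V by blast
    with 2 vux \<open>d u x = d x u\<close> have "d v y + 2 = d v x"
      by simp
    obtain z where z: "E x z" "E z y"
      using gdist_eq_2E V \<open>d x y = 2\<close> by blast
    then have "d v z \<le> Suc (d v y)"
      using gdist_neighbor_le[OF V(1)] edge_sym by blast
    with z \<open>d v y + 2 = d v x\<close> show ?thesis
      using that edge_sym by fastforce
  qed
qed

lemma metric_triangle_in_intervals:
  assumes V: "v \<in> V" "x \<in> V" "y \<in> V"
    and disjoint: "I v x \<inter> I x y \<subseteq> {x}" "I v y \<inter> I x y \<subseteq> {y}"
  obtains v' where "v' \<in> I v x" "v' \<in> I v y" "metric_triangle V E v' x y"
proof -
  have "\<exists>v'. v' \<in> I v x \<inter> I v y \<and> (\<forall>u. u \<in> I v x \<inter> I v y \<longrightarrow> d v u \<le> d v v')"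
    using ex_has_greatest_nat[of "\<lambda>u. u \<in> I v x \<inter> I v y" v "d v" "Suc (d v x)"]
      left_in_interval V unfolding interval_def by fastforce
  then obtain v' where v': "v' \<in> I v x" "v' \<in> I v y"
    and farthest: "\<And>u. u \<in> I v x \<Longrightarrow> u \<in> I v y \<Longrightarrow> d v u \<le> d v v'"
    by blast
  have v'V: "v' \<in> V"
    using v' unfolding interval_def by simp
  have "I v' x \<inter> I v' y \<subseteq> {v'}"
  proof
    fix u assume "u \<in> I v' x \<inter> I v' y"
    then have "u \<in> I v x" "u \<in> I v y" "d v u = d v v' + d v' u" "u \<in> V"
      using interval_trans[OF V(1,2) v'(1)] interval_trans[OF V(1,3) v'(2)]
      unfolding interval_def by auto
    then show "u \<in> {v'}"
      using farthest[of u] gdist_eq_0_iff[OF v'V] by fastforce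
  qed
  moreover have "I v' x \<inter> I x y \<subseteq> {x}" "I v' y \<inter> I x y \<subseteq> {y}"
    using interval_trans[OF V(1,2) v'(1)] interval_trans[OF V(1,3) v'(2)] disjoint by blast+
  ultimately show ?thesis
    using that v' metric_triangleI v'V V by blast
qed

lemma meshedI_metric_triangles:
  assumes equilateral: "\<forall>v x y. metric_triangle V E v x y \<and> d x y = 2 \<longrightarrow>
    d v x = 2 \<and> d v y = 2 \<and> (\<exists>z\<in>V. E x z \<and> E y z \<and> d v z = 2)"
  shows "meshed V E"
  unfolding meshed_def
proof (intro ballI impI)
  fix v x y assume V: "v \<in> V" "x \<in> V" "y \<in> V" and "d x y = 2"
  consider (left) u where "u \<in> I v x" "u \<in> I x y" "u \<noteq> x"
    | (right) u where "u \<in> I v y" "u \<in> I y x" "u \<noteq> y"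
    | (neither) "I v x \<inter> I x y \<subseteq> {x}" "I v y \<inter> I x y \<subseteq> {y}"
    using interval_sym V by blast
  then show "\<exists>z\<in>V. E x z \<and> E y z \<and> 2 * d v z \<le> d v x + d v y"
  proof cases
    case left
    then show ?thesis
      using common_neighbor_if_intervals_overlap[OF V \<open>d x y = 2\<close>] edge_in_V by metis
  next
    case right
    moreover have "d y x = 2"
      using \<open>d x y = 2\<close> gdist_sym V by metis
    ultimately show ?thesis
      using common_neighbor_if_intervals_overlap[OF V(1,3,2)] edge_in_V
      by (metis add.commute)
  next
    case neither
    then obtain v' where v': "v' \<in> I v x" "v' \<in> I v y" "metric_triangle V E v' x y"
      using metric_triangle_in_intervals V by blast
    then obtain z where z: "z \<in> V" "E x z" "E y z" "d v' z = 2" "d v' x = 2" "d v' y = 2"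
      using equilateral \<open>d x y = 2\<close> by blast
    moreover have "d v z \<le> d v v' + d v' z"
      using gdist_triangle V z(1) v' unfolding interval_def by blast
    ultimately show ?thesis
      using v'(1,2) unfolding interval_def by auto
  qed
qed

end

theorem mainTheorem1:
  fixes V :: "'a set" and E :: "'a \<Rightarrow> 'a \<Rightarrow> bool"
  assumes "simple_graph V E" and "connected_graph V E"
  shows "meshed V E \<longleftrightarrow>
    (\<forall>v x y. metric_triangle V E v x y \<and> gdist V E x y = 2 \<longrightarrow>
       gdist V E v x = 2 \<and> gdist V E v y = 2 \<and>
       (\<exists>z\<in>V. E x z \<and> E y z \<and> gdist V E v z = 2))"
proof -
  interpret connected_simple_graph V E
    using assms by unfold_locales
  show ?thesis
    using meshed_metric_triangle_equilateral meshedI_metric_triangles by blast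
qed

end
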